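(* Let $u,v$ be positive integers, let $\mu=(u^v)$ be the $u\times v$ rectangular partition of $n=uv$, and let $s^\mu$ be the number of standard Young tableaux of shape $\mu$. Then $$\left(\frac{n}{u+v}\right)^n\left(\frac{2}{e}\right)^n<s^\mu,$$ where $e=2.71828\ldots$. In particular, if $\alpha\le\frac{n}{u+v}\cdot\frac2e$ then $\alpha^n\le s^\mu$.
   Context: $s^\mu$ equals the dimension of the irreducible representation of $S_n$ over a field of characteristic $0$ indexed by $\mu$, and is given by the hook formula $s^\mu=n!/\prod_{x\in\mu}h_x$, where $h_x$ is the hook number of the box $x$. *)

theory Defs
  imports Complex_Main
begin

text \<open>Young diagram of the rectangular partition (u^v): v rows, each of length u.
  Cells are (i,j) with row index i < v and column index j < u.\<close>
definition rect_cells :: "nat \<Rightarrow> nat \<Rightarrow> (nat \<times> nat) set" where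
  "rect_cells u v = {(i, j). i < v \<and> j < u}"

definition rect_syt :: "nat \<Rightarrow> nat \<Rightarrow> (nat \<times> nat \<Rightarrow> nat) set" where
  "rect_syt u v = {T. bij_betw T (rect_cells u v) {1..u * v}
      \<and> (\<forall>c. c \<notin> rect_cells u v \<longrightarrow> T c = 0)
      \<and> (\<forall>i j. i < v \<and> j + 1 < u \<longrightarrow> T (i, j) < T (i, j + 1))
      \<and> (\<forall>i j. i + 1 < v \<and> j < u \<longrightarrow> T (i, j) < T (i + 1, j))}"

definition num_syt_rect :: "nat \<Rightarrow> nat \<Rightarrow> nat" where
  "num_syt_rect u v = card (rect_syt u v)"

end

theory Submission
  imports Defs "HOL-Library.FuncSet"
begin

text \<open>We bound the number of standard tableaux from below by the hook length formula in
  Frobenius' form: for a partition c with at most v rows and shifted row lengths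
  l_i = c_i + v - 1 - i, the quantity F(c) = N! * prod_{j<i} (l_j - l_i) / prod_i l_i!
  satisfies the branching rule F(c) = sum_i F(c - e_i) over the removable corners; this is read
  off from the partial fraction expansion of prod_j (z - l_j - 1) / (z - l_j). Putting the
  new largest entry into the removed corner embeds the tableaux of the shapes c - e_i
  disjointly into those of shape c, so induction gives F(c) <= s^c. For the rectangle
  F = n! / prod of hooks; the hooks of two cells symmetric about the centre add up to u + v,
  so AM-GM bounds the hook product by ((u + v) / 2)^n, and finally n! > (n / e)^n.\<close>

definition interp_weight :: "nat \<Rightarrow> (nat \<Rightarrow> real) \<Rightarrow> nat \<Rightarrow> real" where
  "interp_weight k x i = (\<Prod>j\<in>{..<k} - {i}. (x i - x j - 1) / (x i - x j))"

definition shift_ratio :: "nat \<Rightarrow> (nat \<Rightarrow> real) \<Rightarrow> real \<Rightarrow> real" where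
  "shift_ratio k x z = (\<Prod>j<k. (z - x j - 1) / (z - x j))"

lemma interp_weight_Suc:
  "i < k \<Longrightarrow> interp_weight (Suc k) x i = interp_weight k x i * ((x i - x k - 1) / (x i - x k))"
proof -
  assume "i < k"
  then have "{..<Suc k} - {i} = insert k ({..<k} - {i})" by auto
  then show ?thesis unfolding interp_weight_def by (simp add: mult.commute)
qed

lemma interp_weight_last: "interp_weight (Suc k) x k = shift_ratio k x (x k)"
proof -
  have "{..<Suc k} - {k} = {..<k}" by auto
  then show ?thesis unfolding interp_weight_def shift_ratio_def by simp
qed

lemma shift_ratio_Suc: "shift_ratio (Suc k) x z = shift_ratio k x z * ((z - x k - 1) / (z - x k))"
  unfolding shift_ratio_def by simp

lemma partial_fraction_shift:
  fixes a y z w :: real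
  assumes "a \<noteq> y" "z \<noteq> a" "z \<noteq> y"
  shows "w / (z - a) * (1 - 1 / (z - y))
           = w * ((a - y - 1) / (a - y)) / (z - a) + w / (a - y) * (1 / (z - y))"
proof -
  have "a - y \<noteq> 0" "z - a \<noteq> 0" "z - y \<noteq> 0" using assms by auto
  then show ?thesis by (simp add: divide_simps) (simp add: algebra_simps)
qed

lemma shift_ratio_partial_fractions:
  assumes "inj_on x {..<k}" "z \<notin> x ` {..<k}"
  shows "shift_ratio k x z = 1 - (\<Sum>i<k. interp_weight k x i / (z - x i))"
  using assms
proof (induction k arbitrary: z)
  case 0
  then show ?case by (simp add: shift_ratio_def)
next
  case (Suc k)
  define y where "y = x k"
  define t where "t = 1 / (z - y)"
  let ?w = "interp_weight k x"
  have inj: "inj_on x {..<k}" using Suc.prems(1) by (auto simp: inj_on_def)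
  have y_new: "\<And>i. i < k \<Longrightarrow> x i \<noteq> y" using Suc.prems(1) unfolding y_def inj_on_def by force
  have z_new: "\<And>i. i < Suc k \<Longrightarrow> z \<noteq> x i" using Suc.prems(2) by force
  have "shift_ratio k x y = 1 - (\<Sum>i<k. ?w i / (y - x i))"
    using Suc.IH[OF inj] y_new by force
  then have ratio_at_y: "shift_ratio k x y = 1 + (\<Sum>i<k. ?w i / (x i - y))"
    by (simp add: sum_negf[symmetric] minus_divide_right)
  have "(z - y - 1) / (z - y) = 1 - t"
    using z_new[of k] by (simp add: t_def y_def field_simps)
  then have "shift_ratio (Suc k) x z = (1 - (\<Sum>i<k. ?w i / (z - x i))) * (1 - t)"
    using Suc.IH[OF inj] z_new by (simp add: shift_ratio_Suc y_def image_iff)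
  also have "\<dots> = 1 - t - (\<Sum>i<k. ?w i / (z - x i) * (1 - t))"
    by (simp only: sum_distrib_right[symmetric]) (simp add: algebra_simps)
  also have "(\<Sum>i<k. ?w i / (z - x i) * (1 - t))
      = (\<Sum>i<k. ?w i * ((x i - y - 1) / (x i - y)) / (z - x i) + ?w i / (x i - y) * t)"
    using y_new z_new partial_fraction_shift[of _ y z]
    by (intro sum.cong) (auto simp: t_def y_def)
  also have "\<dots> = (\<Sum>i<k. ?w i * ((x i - y - 1) / (x i - y)) / (z - x i))
                    + (\<Sum>i<k. ?w i / (x i - y)) * t"
    by (simp add: sum.distrib sum_distrib_right)
  finally have "shift_ratio (Suc k) x z
      = 1 - (\<Sum>i<k. ?w i * ((x i - y - 1) / (x i - y)) / (z - x i)) - shift_ratio k x y * t"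
    unfolding ratio_at_y by (simp add: algebra_simps)
  then show ?case
    by (simp add: interp_weight_Suc interp_weight_last t_def y_def)
qed

lemma interp_weight_sums:
  assumes "inj_on x {..<k}"
  shows "(\<Sum>i<k. interp_weight k x i) = real k
    \<and> (\<Sum>i<k. x i * interp_weight k x i) = (\<Sum>i<k. x i) - real k * (real k - 1) / 2"
  using assms
proof (induction k)
  case 0
  then show ?case by simp
next
  case (Suc k)
  define y where "y = x k"
  let ?w = "interp_weight k x"
  define r where "r = (\<Sum>i<k. ?w i / (x i - y))"
  have inj: "inj_on x {..<k}" using Suc.prems by (auto simp: inj_on_def)
  have y_new: "\<And>i. i < k \<Longrightarrow> x i - y \<noteq> 0" using Suc.prems unfolding y_def inj_on_def by force
  have "shift_ratio k x y = 1 - (\<Sum>i<k. ?w i / (y - x i))"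
    using shift_ratio_partial_fractions[OF inj] y_new by force
  then have ratio_at_y: "shift_ratio k x y = 1 + r"
    unfolding r_def by (simp add: sum_negf[symmetric] minus_divide_right)
  have "(\<Sum>i<k. ?w i * ((x i - y - 1) / (x i - y))) = (\<Sum>i<k. ?w i - ?w i / (x i - y))"
    using y_new by (intro sum.cong) (auto simp: field_simps)
  then have weights_Suc: "(\<Sum>i<Suc k. interp_weight (Suc k) x i) = (\<Sum>i<k. ?w i) - r + (1 + r)"
    by (simp add: interp_weight_Suc interp_weight_last ratio_at_y sum_subtractf r_def y_def[symmetric])
  have "(\<Sum>i<k. x i * (?w i * ((x i - y - 1) / (x i - y))))
      = (\<Sum>i<k. x i * ?w i - ?w i - y * (?w i / (x i - y)))"
    using y_new by (intro sum.cong) (auto simp: field_simps)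
  then have moments_Suc: "(\<Sum>i<Suc k. x i * interp_weight (Suc k) x i)
      = (\<Sum>i<k. x i * ?w i) - (\<Sum>i<k. ?w i) - y * r + y * (1 + r)"
    by (simp add: interp_weight_Suc interp_weight_last ratio_at_y sum_subtractf sum_distrib_left
        r_def y_def[symmetric])
  show ?case
    using Suc.IH[OF inj] unfolding weights_Suc moments_Suc by (simp add: y_def field_simps)
qed

lemma interp_weight_eq_0: "j < k \<Longrightarrow> j \<noteq> i \<Longrightarrow> x j = x i - 1 \<Longrightarrow> interp_weight k x i = 0"
  unfolding interp_weight_def by (intro prod_zero) (auto intro!: bexI[of _ j])

definition vandermonde :: "nat \<Rightarrow> (nat \<Rightarrow> real) \<Rightarrow> real" where
  "vandermonde v x = (\<Prod>i<v. \<Prod>j<i. (x j - x i))"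

lemma vandermonde_cong: "(\<And>i. i < v \<Longrightarrow> x i = y i) \<Longrightarrow> vandermonde v x = vandermonde v y"
  unfolding vandermonde_def by (intro prod.cong refl) auto

lemma vandermonde_Suc: "vandermonde (Suc v) x = vandermonde v x * (\<Prod>j<v. (x j - x v))"
  unfolding vandermonde_def by simp

lemma vandermonde_upd:
  assumes "i < v"
  shows "vandermonde v (x(i := y)) * (\<Prod>j\<in>{..<v} - {i}. (x i - x j))
       = vandermonde v x * (\<Prod>j\<in>{..<v} - {i}. (y - x j))"
  using assms
proof (induction v)
  case 0
  then show ?case by simp
next
  case (Suc v)
  let ?x' = "x(i := y)"
  show ?case
  proof (cases "i = v")
    case True
    have "{..<Suc v} - {i} = {..<v}" using True by auto
    moreover have "vandermonde v ?x' = vandermonde v x"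
      using True by (intro vandermonde_cong) auto
    moreover have "(\<Prod>j<v. ?x' j - ?x' v) = (\<Prod>j<v. x j - y)"
      using True by (intro prod.cong) auto
    moreover have "(\<Prod>j<v. x j - y) * (\<Prod>j<v. x v - x j) = (\<Prod>j<v. x j - x v) * (\<Prod>j<v. y - x j)"
      unfolding prod.distrib[symmetric] by (intro prod.cong) (auto simp: algebra_simps)
    ultimately show ?thesis
      unfolding vandermonde_Suc using True by (simp add: ac_simps)
  next
    case False
    then have i: "i < v" using Suc.prems by simp
    define Q where "Q = (\<Prod>j\<in>{..<v} - {i}. (x j - x v))"
    have split: "(\<Prod>j<v. f j) = f i * (\<Prod>j\<in>{..<v} - {i}. f j)" for f :: "nat \<Rightarrow> real"
      using i by (simp add: prod.remove)
    have "(\<Prod>j\<in>{..<v} - {i}. ?x' j - ?x' v) = Q"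
      unfolding Q_def using False by (intro prod.cong) auto
    then have last': "(\<Prod>j<v. ?x' j - ?x' v) = (y - x v) * Q"
      using False by (subst split) simp
    have last: "(\<Prod>j<v. x j - x v) = (x i - x v) * Q"
      unfolding Q_def by (rule split)
    define P where "P = (\<Prod>j\<in>{..<v} - {i}. (x i - x j))"
    define R where "R = (\<Prod>j\<in>{..<v} - {i}. (y - x j))"
    have IH: "vandermonde v ?x' * P = vandermonde v x * R"
      using Suc.IH[OF i] unfolding P_def R_def .
    have "{..<Suc v} - {i} = insert v ({..<v} - {i})" using False by auto
    then have ins: "(\<Prod>j\<in>{..<Suc v} - {i}. f j) = f v * (\<Prod>j\<in>{..<v} - {i}. f j)"
      for f :: "nat \<Rightarrow> real" by simp
    have "vandermonde v ?x' * ((y - x v) * Q) * ((x i - x v) * P)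
        = (vandermonde v ?x' * P) * ((y - x v) * Q * (x i - x v))"
      by (simp only: ac_simps)
    also have "\<dots> = vandermonde v x * ((x i - x v) * Q) * ((y - x v) * R)"
      unfolding IH by (simp only: ac_simps)
    finally show ?thesis
      unfolding vandermonde_Suc last' last ins P_def R_def .
  qed
qed

lemma vandermonde_decrement:
  assumes "inj_on x {..<v}" "i < v"
  shows "vandermonde v (x(i := x i - 1)) = vandermonde v x * interp_weight v x i"
proof -
  define P where "P = (\<Prod>j\<in>{..<v} - {i}. (x i - x j))"
  define R where "R = (\<Prod>j\<in>{..<v} - {i}. (x i - 1 - x j))"
  have "P \<noteq> 0"
    using assms unfolding P_def inj_on_def by auto
  then have "vandermonde v (x(i := x i - 1)) = vandermonde v x * (R / P)"
    using vandermonde_upd[OF assms(2), of x "x i - 1"] unfolding P_def[symmetric] R_def[symmetric]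
    by (simp add: field_simps)
  also have "R / P = interp_weight v x i"
    unfolding interp_weight_def R_def P_def prod_dividef[symmetric]
    by (intro prod.cong refl) (simp add: algebra_simps)
  finally show ?thesis .
qed

text \<open>A partition with at most v parts is given by its row lengths c 0, ..., c (v - 1);
  the values of c beyond v are irrelevant.\<close>

definition young_cells :: "nat \<Rightarrow> (nat \<Rightarrow> nat) \<Rightarrow> (nat \<times> nat) set" where
  "young_cells v c = {(i, j). i < v \<and> j < c i}"

definition young_size :: "nat \<Rightarrow> (nat \<Rightarrow> nat) \<Rightarrow> nat" where
  "young_size v c = (\<Sum>i<v. c i)"

definition is_partition :: "nat \<Rightarrow> (nat \<Rightarrow> nat) \<Rightarrow> bool" where
  "is_partition v c \<longleftrightarrow> (\<forall>i. Suc i < v \<longrightarrow> c (Suc i) \<le> c i)"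

definition young_syt :: "nat \<Rightarrow> (nat \<Rightarrow> nat) \<Rightarrow> (nat \<times> nat \<Rightarrow> nat) set" where
  "young_syt v c = {T. bij_betw T (young_cells v c) {1..young_size v c}
      \<and> (\<forall>p. p \<notin> young_cells v c \<longrightarrow> T p = 0)
      \<and> (\<forall>i j. i < v \<and> j + 1 < c i \<longrightarrow> T (i, j) < T (i, j + 1))
      \<and> (\<forall>i j. i + 1 < v \<and> j < c (i + 1) \<longrightarrow> T (i, j) < T (i + 1, j))}"

definition removable_rows :: "nat \<Rightarrow> (nat \<Rightarrow> nat) \<Rightarrow> nat set" where
  "removable_rows v c = {i. i < v \<and> 0 < c i \<and> is_partition v (c(i := c i - 1))}"

definition add_corner ::
    "nat \<Rightarrow> (nat \<Rightarrow> nat) \<Rightarrow> nat \<Rightarrow> (nat \<times> nat \<Rightarrow> nat) \<Rightarrow> nat \<times> nat \<Rightarrow> nat" where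
  "add_corner v c i T = T((i, c i - 1) := young_size v c)"

lemma rect_syt_eq_young_syt: "rect_syt u v = young_syt v (\<lambda>_. u)"
proof -
  have "young_cells v (\<lambda>_. u) = rect_cells u v" unfolding young_cells_def rect_cells_def by simp
  moreover have "young_size v (\<lambda>_. u) = u * v" unfolding young_size_def by simp
  ultimately show ?thesis unfolding rect_syt_def young_syt_def by simp
qed

lemma is_partition_antimono:
  assumes "is_partition v c" "j \<le> i" "i < v"
  shows "c i \<le> c j"
  using assms(2,3)
proof (induction rule: dec_induct)
  case (step k)
  then show ?case using assms(1) unfolding is_partition_def by (metis Suc_lessD le_trans)
qed simp

lemma finite_young_cells: "finite (young_cells v c)"
proof -
  have "young_cells v c \<subseteq> {..<v} \<times> {..<young_size v c}"
    unfolding young_cells_def young_size_def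
    using member_le_sum[of _ "{..<v}" c] by fastforce
  then show ?thesis by (rule finite_subset) auto
qed

lemma finite_young_syt: "finite (young_syt v c)"
proof -
  let ?C = "young_cells v c"
  let ?extend = "\<lambda>f p. if p \<in> ?C then f p else 0"
  have "young_syt v c \<subseteq> ?extend ` (?C \<rightarrow>\<^sub>E {1..young_size v c})"
  proof
    fix T assume T: "T \<in> young_syt v c"
    then have "restrict T ?C \<in> ?C \<rightarrow>\<^sub>E {1..young_size v c}"
      unfolding young_syt_def using bij_betw_apply by fastforce
    moreover have "T = ?extend (restrict T ?C)" using T unfolding young_syt_def by auto
    ultimately show "T \<in> ?extend ` (?C \<rightarrow>\<^sub>E {1..young_size v c})" by blast
  qed
  then show ?thesis
    by (rule finite_subset) (intro finite_imageI finite_PiE finite_young_cells; simp)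
qed

lemma young_syt_le_size:
  assumes "T \<in> young_syt v c"
  shows "T p \<le> young_size v c"
proof (cases "p \<in> young_cells v c")
  case True
  then show ?thesis using assms unfolding young_syt_def by (auto dest: bij_betw_apply)
next
  case False
  then have "T p = 0" using assms unfolding young_syt_def by blast
  then show ?thesis by simp
qed

lemma young_size_remove:
  "i < v \<Longrightarrow> 0 < c i \<Longrightarrow> young_size v c = Suc (young_size v (c(i := c i - 1)))"
  unfolding young_size_def by (simp add: sum.remove)

lemma young_cells_remove:
  "i < v \<Longrightarrow> 0 < c i \<Longrightarrow> young_cells v c = young_cells v (c(i := c i - 1)) \<union> {(i, c i - 1)}"
  unfolding young_cells_def by (auto split: if_splits)

lemma not_removable_row:
  assumes part: "is_partition v c" and "i < v" and "i \<notin> removable_rows v c"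
  shows "(c i = 0 \<and> Suc i = v) \<or> (Suc i < v \<and> c (Suc i) = c i)"
proof (cases "c i = 0")
  case True
  then show ?thesis using part \<open>i < v\<close> unfolding is_partition_def by (cases "Suc i < v") auto
next
  case False
  then obtain k where k: "Suc k < v" "(c(i := c i - 1)) k < (c(i := c i - 1)) (Suc k)"
    using assms unfolding removable_rows_def is_partition_def by (auto simp: not_le)
  have "c (Suc k) \<le> c k" using part k(1) unfolding is_partition_def by simp
  then have "k = i" using k(2) by (auto split: if_splits)
  then show ?thesis using k \<open>c (Suc k) \<le> c k\<close> by (auto split: if_splits)
qed

lemma removed_syt_less_size:
  assumes "i \<in> removable_rows v c" "T \<in> young_syt v (c(i := c i - 1))"
  shows "T p < young_size v c"
proof -
  have "T p \<le> young_size v (c(i := c i - 1))" by (rule young_syt_le_size[OF assms(2)])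
  then show ?thesis
    using young_size_remove[of i v c] assms(1) unfolding removable_rows_def by simp
qed

lemma add_corner_bij:
  assumes i: "i \<in> removable_rows v c" and T: "T \<in> young_syt v (c(i := c i - 1))"
  shows "bij_betw (add_corner v c i T) (young_cells v c) {1..young_size v c}"
proof -
  let ?c = "c(i := c i - 1)" and ?corner = "(i, c i - 1)"
  have iv: "i < v" and ci: "0 < c i" using i unfolding removable_rows_def by auto
  have size: "young_size v c = Suc (young_size v ?c)" using young_size_remove[of i v c] iv ci by simp
  have new: "?corner \<notin> young_cells v ?c" unfolding young_cells_def by auto
  have "bij_betw T (young_cells v ?c) {1..young_size v ?c}"
    using T unfolding young_syt_def by blast
  then have "bij_betw (add_corner v c i T) (young_cells v ?c) {1..young_size v ?c}"
    using new unfolding add_corner_def by (auto intro: bij_betw_cong[THEN iffD1])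
  then have "bij_betw (add_corner v c i T) (young_cells v ?c \<union> {?corner})
                ({1..young_size v ?c} \<union> {add_corner v c i T ?corner})"
    using new size by (intro notIn_Un_bij_betw) (auto simp: add_corner_def)
  moreover have "{1..young_size v ?c} \<union> {add_corner v c i T ?corner} = {1..young_size v c}"
    using size by (auto simp: add_corner_def)
  ultimately show ?thesis using young_cells_remove[of i v c] iv ci by simp
qed

lemma add_corner_in_young_syt:
  assumes i: "i \<in> removable_rows v c" and T: "T \<in> young_syt v (c(i := c i - 1))"
  shows "add_corner v c i T \<in> young_syt v c"
proof -
  let ?c = "c(i := c i - 1)" and ?corner = "(i, c i - 1)" and ?T = "add_corner v c i T"
  have iv: "i < v" and ci: "0 < c i" and part: "is_partition v ?c"
    using i unfolding removable_rows_def by auto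
  have zero: "\<forall>p. p \<notin> young_cells v ?c \<longrightarrow> T p = 0"
    and row: "\<forall>a j. a < v \<and> j + 1 < ?c a \<longrightarrow> T (a, j) < T (a, j + 1)"
    and col: "\<forall>a j. a + 1 < v \<and> j < ?c (a + 1) \<longrightarrow> T (a, j) < T (a + 1, j)"
    using T unfolding young_syt_def by auto
  have at_corner: "?T ?corner = young_size v c" and off_corner: "p \<noteq> ?corner \<Longrightarrow> ?T p = T p" for p
    unfolding add_corner_def by auto
  have below_corner: "p \<noteq> ?corner \<Longrightarrow> ?T p < ?T ?corner" for p
    using removed_syt_less_size[OF i T, of p] by (simp add: at_corner off_corner del: One_nat_def)
  have "\<forall>p. p \<notin> young_cells v c \<longrightarrow> ?T p = 0"
    using zero young_cells_remove[of i v c] iv ci by (auto simp: off_corner)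
  moreover have "?T (a, j) < ?T (a, j + 1)" if "a < v" "j + 1 < c a" for a j
  proof (cases "(a, j + 1) = ?corner")
    case False
    moreover have "(a, j) \<noteq> ?corner" using that by auto
    moreover have "j + 1 < ?c a" using that False by auto
    ultimately show ?thesis using row that by (simp add: off_corner)
  next
    case True
    then have "(a, j) \<noteq> ?corner" by auto
    then show ?thesis using below_corner True by simp
  qed
  moreover have "?T (a, j) < ?T (a + 1, j)" if "a + 1 < v" "j < c (a + 1)" for a j
  proof (cases "(a + 1, j) = ?corner")
    case False
    have "?c (a + 1) \<le> ?c a" using part that unfolding is_partition_def by auto
    then have "(a, j) \<noteq> ?corner" using that ci by auto
    moreover have "j < ?c (a + 1)" using that False by auto
    ultimately show ?thesis using col that False by (simp add: off_corner)
  next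
    case True
    then have "(a, j) \<noteq> ?corner" by auto
    then show ?thesis using below_corner True by simp
  qed
  ultimately show ?thesis
    using add_corner_bij[OF i T] unfolding young_syt_def by blast
qed

lemma sum_card_young_syt_remove_le:
  "(\<Sum>i\<in>removable_rows v c. card (young_syt v (c(i := c i - 1)))) \<le> card (young_syt v c)"
proof -
  let ?S = "\<lambda>i. young_syt v (c(i := c i - 1))"
  let ?corner = "\<lambda>i. (i, c i - 1)"
  have inj: "inj_on (add_corner v c i) (?S i)" for i
  proof (rule inj_onI)
    fix T T' assume "T \<in> ?S i" "T' \<in> ?S i" and eq: "add_corner v c i T = add_corner v c i T'"
    moreover have "?corner i \<notin> young_cells v (c(i := c i - 1))" unfolding young_cells_def by auto
    ultimately have "T (?corner i) = T' (?corner i)" unfolding young_syt_def by auto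
    then show "T = T'" using eq unfolding add_corner_def by (metis fun_upd_triv fun_upd_upd)
  qed
  have disjoint: "add_corner v c i ` ?S i \<inter> add_corner v c j ` ?S j = {}"
    if "j \<in> removable_rows v c" "i \<noteq> j" for i j
  proof -
    have "add_corner v c j T' (?corner i) < young_size v c" if "T' \<in> ?S j" for T'
      using removed_syt_less_size[OF \<open>j \<in> removable_rows v c\<close> that] \<open>i \<noteq> j\<close>
      by (simp add: add_corner_def)
    moreover have "add_corner v c i T (?corner i) = young_size v c" for T
      by (simp add: add_corner_def)
    ultimately show ?thesis by (auto simp del: One_nat_def) (metis less_irrefl)
  qed
  have "(\<Sum>i\<in>removable_rows v c. card (?S i)) = (\<Sum>i\<in>removable_rows v c. card (add_corner v c i ` ?S i))"
    using inj by (simp add: card_image)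
  also have "\<dots> = card (\<Union>i\<in>removable_rows v c. add_corner v c i ` ?S i)"
    using disjoint by (intro card_UN_disjoint[symmetric]) (auto simp: finite_young_syt removable_rows_def)
  also have "\<dots> \<le> card (young_syt v c)"
    using add_corner_in_young_syt by (intro card_mono finite_young_syt) auto
  finally show ?thesis .
qed

definition shifted_len :: "nat \<Rightarrow> (nat \<Rightarrow> nat) \<Rightarrow> nat \<Rightarrow> nat" where
  "shifted_len v c i = c i + v - 1 - i"

definition frobenius :: "nat \<Rightarrow> (nat \<Rightarrow> nat) \<Rightarrow> real" where
  "frobenius v c = fact (young_size v c) * vandermonde v (\<lambda>i. real (shifted_len v c i))
      / (\<Prod>i<v. fact (shifted_len v c i))"

lemma real_shifted_len: "i < v \<Longrightarrow> real (shifted_len v c i) = real (c i) + real v - 1 - real i"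
  unfolding shifted_len_def by (simp add: of_nat_diff)

lemma shifted_len_gap:
  assumes "is_partition v c" "j < i" "i < v"
  shows "shifted_len v c i < shifted_len v c j"
proof -
  have "c i \<le> c j" using is_partition_antimono[OF assms(1) _ assms(3)] assms(2) by simp
  then show ?thesis using assms(2,3) unfolding shifted_len_def by simp
qed

lemma inj_on_shifted_len: "is_partition v c \<Longrightarrow> inj_on (\<lambda>i. real (shifted_len v c i)) {..<v}"
  by (intro inj_onI) (metis lessThan_iff linorder_neqE_nat of_nat_eq_iff order_less_irrefl shifted_len_gap)

lemma sum_shifted_len:
  "(\<Sum>i<v. real (shifted_len v c i)) = real (young_size v c) + real v * (real v - 1) / 2"
proof -
  have "(\<Sum>i<v. real i) = real v * (real v - 1) / 2"
    by (induction v) (auto simp: field_simps)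
  then show ?thesis
    by (simp add: real_shifted_len young_size_def sum.distrib sum_subtractf field_simps)
qed

lemma shifted_len_remove:
  "i < v \<Longrightarrow> 0 < c i \<Longrightarrow> shifted_len v (c(i := c i - 1)) = (shifted_len v c)(i := shifted_len v c i - 1)"
  unfolding shifted_len_def by auto

lemma prod_fact_decrement:
  assumes "finite A" "i \<in> A" "0 < f i"
  shows "real (f i) * (\<Prod>j\<in>A. fact ((f(i := f i - 1)) j)) = (\<Prod>j\<in>A. (fact (f j) :: real))"
proof -
  have "(\<Prod>j\<in>A. (fact (f j) :: real)) = fact (f i) * (\<Prod>j\<in>A - {i}. fact (f j))"
    using assms by (simp add: prod.remove)
  moreover have "(\<Prod>j\<in>A. fact ((f(i := f i - 1)) j)) = fact (f i - 1) * (\<Prod>j\<in>A - {i}. (fact (f j) :: real))"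
    using assms by (simp add: prod.remove)
  moreover have "(fact (f i) :: real) = real (f i) * fact (f i - 1)"
    using assms(3) by (simp add: fact_reduce)
  ultimately show ?thesis by simp
qed

lemma frobenius_remove:
  assumes part: "is_partition v c" and i: "i \<in> removable_rows v c"
  defines "x \<equiv> \<lambda>j. real (shifted_len v c j)"
  shows "frobenius v (c(i := c i - 1)) = frobenius v c * x i * interp_weight v x i / real (young_size v c)"
proof -
  let ?c = "c(i := c i - 1)"
  have iv: "i < v" and ci: "0 < c i" using i unfolding removable_rows_def by auto
  have shifted: "shifted_len v ?c = (shifted_len v c)(i := shifted_len v c i - 1)"
    using shifted_len_remove[of i v c] iv ci by simp
  have pos: "0 < shifted_len v c i" using ci iv unfolding shifted_len_def by simp
  have "(\<lambda>j. real (shifted_len v ?c j)) = x(i := x i - 1)"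
    using pos unfolding shifted x_def by (auto simp: of_nat_diff)
  then have V: "vandermonde v (\<lambda>j. real (shifted_len v ?c j)) = vandermonde v x * interp_weight v x i"
    using vandermonde_decrement[OF inj_on_shifted_len[OF part] iv] unfolding x_def by simp
  have F: "x i * (\<Prod>j<v. fact (shifted_len v ?c j)) = (\<Prod>j<v. fact (shifted_len v c j))"
    unfolding shifted x_def using iv pos by (intro prod_fact_decrement) auto
  have size: "young_size v c = Suc (young_size v ?c)"
    using young_size_remove[of i v c] iv ci by simp
  then have N: "(fact (young_size v c) :: real) = real (young_size v c) * fact (young_size v ?c)"
    by simp
  have "x i \<noteq> 0" "real (young_size v c) \<noteq> 0" using pos size unfolding x_def by auto
  then show ?thesis
    unfolding frobenius_def V F[symmetric] N by (simp add: field_simps x_def)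
qed

lemma frobenius_branching:
  assumes part: "is_partition v c" and "0 < young_size v c"
  shows "(\<Sum>i\<in>removable_rows v c. frobenius v (c(i := c i - 1))) = frobenius v c"
proof -
  define x where "x = (\<lambda>j. real (shifted_len v c j))"
  have zero: "x i * interp_weight v x i = 0" if "i < v" "i \<notin> removable_rows v c" for i
    using not_removable_row[OF part that]
  proof
    assume "c i = 0 \<and> Suc i = v"
    then show ?thesis unfolding x_def shifted_len_def by auto
  next
    assume "Suc i < v \<and> c (Suc i) = c i"
    then have "interp_weight v x i = 0"
      by (intro interp_weight_eq_0[of "Suc i"]) (auto simp: x_def real_shifted_len)
    then show ?thesis by simp
  qed
  have "(\<Sum>i\<in>removable_rows v c. frobenius v (c(i := c i - 1)))
      = (\<Sum>i\<in>removable_rows v c. frobenius v c / real (young_size v c) * (x i * interp_weight v x i))"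
    using frobenius_remove[OF part] unfolding x_def by (intro sum.cong) auto
  also have "\<dots> = frobenius v c / real (young_size v c) * (\<Sum>i\<in>removable_rows v c. x i * interp_weight v x i)"
    by (simp add: sum_distrib_left)
  also have "(\<Sum>i\<in>removable_rows v c. x i * interp_weight v x i) = (\<Sum>i<v. x i * interp_weight v x i)"
    using zero by (intro sum.mono_neutral_left) (auto simp: removable_rows_def)
  also have "\<dots> = real (young_size v c)"
    using interp_weight_sums[OF inj_on_shifted_len[OF part]] sum_shifted_len[of v c]
    unfolding x_def by simp
  also have "frobenius v c / real (young_size v c) * real (young_size v c) = frobenius v c"
    using assms(2) by simp
  finally show ?thesis .
qed

lemma frobenius_cong: "(\<And>i. i < v \<Longrightarrow> c i = d i) \<Longrightarrow> frobenius v c = frobenius v d"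
proof -
  assume eq: "\<And>i. i < v \<Longrightarrow> c i = d i"
  then have "young_size v c = young_size v d" unfolding young_size_def by simp
  moreover have "vandermonde v (\<lambda>i. real (shifted_len v c i)) = vandermonde v (\<lambda>i. real (shifted_len v d i))"
    using eq by (intro vandermonde_cong) (simp add: shifted_len_def)
  moreover have "(\<Prod>i<v. fact (shifted_len v c i)) = (\<Prod>i<v. (fact (shifted_len v d i) :: real))"
    using eq by (intro prod.cong) (auto simp: shifted_len_def)
  ultimately show ?thesis unfolding frobenius_def by simp
qed

lemma frobenius_const:
  "frobenius v (\<lambda>_. a) = fact (a * v) * (\<Prod>i<v. fact i) / (\<Prod>i<v. fact (a + i))"
proof -
  have "vandermonde v (\<lambda>i. real (shifted_len v (\<lambda>_. a) i)) = (\<Prod>i<v. \<Prod>j<i. real (i - j))"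
    unfolding vandermonde_def by (intro prod.cong refl) (simp add: real_shifted_len of_nat_diff)
  also have "\<dots> = (\<Prod>i<v. fact i)"
    by (simp add: fact_prod_rev atLeast0LessThan)
  finally have V: "vandermonde v (\<lambda>i. real (shifted_len v (\<lambda>_. a) i)) = (\<Prod>i<v. fact i)" .
  have "(\<Prod>i<v. fact (shifted_len v (\<lambda>_. a) i)) = (\<Prod>i<v. (\<lambda>k. fact (a + k)) (v - Suc i) :: real)"
    unfolding shifted_len_def by (intro prod.cong refl) (simp add: Suc_diff_Suc del: fact_Suc)
  also have "\<dots> = (\<Prod>i<v. fact (a + i))"
    by (rule prod.nat_diff_reindex)
  finally show ?thesis
    unfolding frobenius_def V by (simp add: young_size_def mult.commute)
qed

lemma frobenius_le_card_young_syt: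
  "is_partition v c \<Longrightarrow> frobenius v c \<le> real (card (young_syt v c))"
proof (induction "young_size v c" arbitrary: c)
  case 0
  then have empty: "c i = 0" if "i < v" for i using that unfolding young_size_def by simp
  then have "frobenius v c = 1"
    using frobenius_cong[of v c "\<lambda>_. 0"] by (simp add: frobenius_const)
  moreover have "young_cells v c = {}" using empty unfolding young_cells_def by auto
  then have "(\<lambda>_. 0) \<in> young_syt v c"
    using empty \<open>0 = young_size v c\<close> unfolding young_syt_def by (auto simp: bij_betw_def)
  then have "1 \<le> card (young_syt v c)"
    using finite_young_syt by (metis Suc_leI card_gt_0_iff empty_iff One_nat_def)
  ultimately show ?case by simp
next
  case (Suc m)
  have IH: "frobenius v (c(i := c i - 1)) \<le> real (card (young_syt v (c(i := c i - 1))))"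
    if "i \<in> removable_rows v c" for i
    using Suc.hyps young_size_remove[of i v c] that unfolding removable_rows_def by auto
  have "frobenius v c = (\<Sum>i\<in>removable_rows v c. frobenius v (c(i := c i - 1)))"
    using frobenius_branching[OF Suc.prems] Suc.hyps(2) by simp
  also have "\<dots> \<le> (\<Sum>i\<in>removable_rows v c. real (card (young_syt v (c(i := c i - 1)))))"
    by (intro sum_mono IH)
  also have "\<dots> \<le> real (card (young_syt v c))"
    using sum_card_young_syt_remove_le[of v c] by (simp flip: of_nat_sum)
  finally show ?case .
qed

text \<open>The factor for (i, j) is the hook length of the cell (v - 1 - i, u - 1 - j) of the
  u x v rectangle.\<close>

definition rect_hook_product :: "nat \<Rightarrow> nat \<Rightarrow> real" where
  "rect_hook_product u v = (\<Prod>i<v. \<Prod>j<u. real (i + j + 1))"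

lemma frobenius_rect: "frobenius v (\<lambda>_. u) = fact (u * v) / rect_hook_product u v"
proof -
  have "(fact (u + i) :: real) = fact i * (\<Prod>j<u. real (i + j + 1))" for i
    by (induction u) (auto simp: algebra_simps)
  then have "(\<Prod>i<v. (fact (u + i) :: real)) = (\<Prod>i<v. fact i) * rect_hook_product u v"
    unfolding rect_hook_product_def by (simp add: prod.distrib)
  moreover have "(\<Prod>i<v. (fact i :: real)) \<noteq> 0" by simp
  ultimately show ?thesis unfolding frobenius_const by simp
qed

lemma mult_le_square_mean: "(a::real) * b \<le> ((a + b) / 2) ^ 2"
  using sum_squares_bound[of a b] by (simp add: power2_eq_square field_simps)

lemma rect_hook_product_le: "rect_hook_product u v \<le> ((real u + real v) / 2) ^ (u * v)"
proof -
  define M where "M = (real u + real v) / 2"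
  define h where "h i j = real (i + j + 1)" for i j
  have H: "rect_hook_product u v = (\<Prod>i<v. \<Prod>j<u. h i j)"
    unfolding rect_hook_product_def h_def ..
  also have "\<dots> = (\<Prod>i<v. \<Prod>j<u. h i (u - Suc j))"
    by (simp only: prod.nat_diff_reindex)
  also have "\<dots> = (\<Prod>i<v. \<Prod>j<u. h (v - Suc i) (u - Suc j))"
    by (rule prod.nat_diff_reindex[where g = "\<lambda>i. \<Prod>j<u. h i (u - Suc j)", symmetric])
  finally have H': "rect_hook_product u v = (\<Prod>i<v. \<Prod>j<u. h (v - Suc i) (u - Suc j))" .
  have "rect_hook_product u v ^ 2 = (\<Prod>i<v. \<Prod>j<u. h i j * h (v - Suc i) (u - Suc j))"
    unfolding power2_eq_square by (subst (1) H, subst H') (simp add: prod.distrib)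
  also have "\<dots> \<le> (\<Prod>i<v. \<Prod>j<u. M ^ 2)"
  proof (intro prod_mono conjI)
    fix i j assume "i \<in> {..<v}" "j \<in> {..<u}"
    then have "M = (h i j + h (v - Suc i) (u - Suc j)) / 2"
      unfolding h_def M_def by (simp add: of_nat_diff)
    then show "h i j * h (v - Suc i) (u - Suc j) \<le> M ^ 2"
      by (simp only: mult_le_square_mean)
  qed (auto intro!: prod_nonneg simp: h_def)
  also have "\<dots> = (M ^ (u * v)) ^ 2"
    by (simp add: power_mult[symmetric] ac_simps)
  finally show ?thesis
    unfolding M_def by (rule power2_le_imp_le) simp
qed

lemma power_div_fact_less_exp:
  fixes x :: real
  assumes "0 < x"
  shows "x ^ n / fact n < exp x"
proof -
  have exp_sums: "(\<lambda>k. x ^ k / fact k) sums exp x"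
    using exp_converges[of x] by (simp add: divide_inverse_commute scaleR_conv_of_real)
  have "x ^ n / fact n < x ^ n / fact n + x ^ Suc n / fact (Suc n)"
    using assms by simp
  also have "\<dots> \<le> (\<Sum>k<Suc (Suc n). x ^ k / fact k)"
    using assms by (simp add: sum_nonneg)
  also have "\<dots> \<le> exp x"
    unfolding sums_unique[OF exp_sums]
    by (rule sum_le_suminf[OF sums_summable[OF exp_sums]]) (use assms in auto)
  finally show ?thesis .
qed

lemma num_syt_rect_ge: "fact (u * v) / ((real u + real v) / 2) ^ (u * v) \<le> real (num_syt_rect u v)"
proof -
  have "0 < ((real u + real v) / 2) ^ (u * v)" by (cases "u = 0 \<and> v = 0") auto
  moreover have "0 < rect_hook_product u v" unfolding rect_hook_product_def by (intro prod_pos) auto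
  ultimately have "fact (u * v) / ((real u + real v) / 2) ^ (u * v) \<le> fact (u * v) / rect_hook_product u v"
    using rect_hook_product_le[of u v] by (intro divide_left_mono mult_pos_pos) auto
  also have "\<dots> = frobenius v (\<lambda>_. u)"
    by (simp add: frobenius_rect)
  also have "\<dots> \<le> real (num_syt_rect u v)"
    unfolding num_syt_rect_def rect_syt_eq_young_syt
    by (rule frobenius_le_card_young_syt) (simp add: is_partition_def)
  finally show ?thesis .
qed

theorem lemma3p12:
  fixes u v n :: nat
  assumes "0 < u" and "0 < v" and "n = u * v"
  shows "(real n / real (u + v)) ^ n * (2 / exp 1) ^ n < real (num_syt_rect u v)
         \<and> (\<forall>\<alpha>::real. 0 \<le> \<alpha> \<and> \<alpha> \<le> real n / real (u + v) * (2 / exp 1)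
               \<longrightarrow> \<alpha> ^ n \<le> real (num_syt_rect u v))"
proof -
  define M where "M = (real u + real v) / 2"
  have "0 < M" "0 < n" using assms unfolding M_def by simp_all
  then have "real n ^ n / fact n < exp (real n * 1)"
    using power_div_fact_less_exp[of "real n" n] by simp
  then have "(real n / exp 1) ^ n < fact n"
    by (simp only: exp_of_nat_mult) (simp add: power_divide divide_less_eq mult.commute)
  then have "(real n / real (u + v)) ^ n * (2 / exp 1) ^ n < fact n / M ^ n"
    using \<open>0 < M\<close> unfolding M_def by (simp add: power_divide power_mult_distrib field_simps)
  with num_syt_rect_ge[of u v]
  have main: "(real n / real (u + v)) ^ n * (2 / exp 1) ^ n < real (num_syt_rect u v)"
    unfolding M_def assms(3) by linarith
  have "\<alpha> ^ n \<le> real (num_syt_rect u v)"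
    if "0 \<le> \<alpha>" "\<alpha> \<le> real n / real (u + v) * (2 / exp 1)" for \<alpha> :: real
  proof -
    have "\<alpha> ^ n \<le> (real n / real (u + v) * (2 / exp 1)) ^ n"
      using that by (intro power_mono)
    then show ?thesis using main unfolding power_mult_distrib by linarith
  qed
  with main show ?thesis by blast
qed

end
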